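(* Let $G$ be a modular noetherian right $\ell$-group in which the meet $s^{-1} := \bigwedge X(G^-)$ exists. Then an element $g \in G^-$ is meet-irreducible in $G^-$ if and only if $g$ is a dual chain, i.e. the interval $[g,e]$ is a chain.
   Context: A right $\ell$-group is a group $G$ (identity $e$) with a right-invariant partial order making $G$ a lattice. It is modular if the lattice is modular. It is noetherian if for each $g$ the set $\{h \geq g\}$ satisfies the descending chain condition and the set $\{h \leq g\}$ satisfies the ascending chain condition. $G^- = \{g \leq e\}$, $X(G^-)$ is the set of elements covered by $e$, and $[a,b] = \{x : a \leq x \leq b\}$. An element $g$ is meet-irreducible in $G^-$ if there are no $a,b \in G^-$, both different from $g$, with $g = a\wedge b$. *)

theory Defs
  imports Main
begin

definition right_l_group :: "('a::lattice \<Rightarrow> 'a \<Rightarrow> 'a) \<Rightarrow> 'a \<Rightarrow> ('a \<Rightarrow> 'a) \<Rightarrow> bool" where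
  "right_l_group m e i \<longleftrightarrow>
     (\<forall>x y z. m (m x y) z = m x (m y z)) \<and>
     (\<forall>x. m e x = x \<and> m x e = x) \<and>
     (\<forall>x. m (i x) x = e \<and> m x (i x) = e) \<and>
     (\<forall>x y z. x \<le> y \<longrightarrow> m x z \<le> m y z)"

definition modular_lattice :: "'a::lattice itself \<Rightarrow> bool" where
  "modular_lattice _ \<longleftrightarrow> (\<forall>x y z::'a. x \<le> z \<longrightarrow> sup x (inf y z) = inf (sup x y) z)"

definition noetherian_order :: "'a::order itself \<Rightarrow> bool" where
  "noetherian_order _ \<longleftrightarrow> (\<forall>g::'a.
     (\<nexists>f::nat \<Rightarrow> 'a. (\<forall>n. g \<le> f n) \<and> (\<forall>n. f (Suc n) < f n)) \<and>
     (\<nexists>f::nat \<Rightarrow> 'a. (\<forall>n. f n \<le> g) \<and> (\<forall>n. f n < f (Suc n))))"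

definition covered_by :: "'a::order \<Rightarrow> 'a \<Rightarrow> bool" where
  "covered_by x y \<longleftrightarrow> x < y \<and> \<not> (\<exists>z. x < z \<and> z < y)"

definition coatoms_below :: "'a::order \<Rightarrow> 'a set" where
  "coatoms_below e = {x. covered_by x e}"

definition is_meet_of :: "'a::order set \<Rightarrow> 'a \<Rightarrow> bool" where
  "is_meet_of A s \<longleftrightarrow> (\<forall>x\<in>A. s \<le> x) \<and> (\<forall>t. (\<forall>x\<in>A. t \<le> x) \<longrightarrow> t \<le> s)"

definition meet_irreducible_neg :: "'a::lattice \<Rightarrow> 'a \<Rightarrow> bool" where
  "meet_irreducible_neg e g \<longleftrightarrow> g \<le> e \<and>
     \<not> (\<exists>a b. a \<le> e \<and> b \<le> e \<and> a \<noteq> g \<and> b \<noteq> g \<and> g = inf a b)"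

definition dual_chain :: "'a::order \<Rightarrow> 'a \<Rightarrow> bool" where
  "dual_chain e g \<longleftrightarrow> (\<forall>x y. g \<le> x \<and> x \<le> e \<and> g \<le> y \<and> y \<le> e \<longrightarrow> x \<le> y \<or> y \<le> x)"

end

theory Submission
  imports Defs
begin

text \<open>Let \<open>\<sigma>\<close> be the meet of the coatoms of \<open>G\<^sup>-\<close> (the paper's \<open>s\<^sup>-\<^sup>1\<close>). Right translation
  by \<open>x\<close> maps the coatoms onto the lower covers of \<open>x\<close>, so \<open>\<sigma> x\<close> is the meet of the lower covers
  of \<open>x\<close>. By modularity \<open>x \<mapsto> \<sigma> x\<close> is monotone, and with the Jordan--Dedekind chain
  condition it maps covers to covers.

  In a noetherian lattice a meet-irreducible \<open>g < e\<close> of \<open>G\<^sup>-\<close> has an upper cover \<open>g'\<close> lying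
  below every element of \<open>(g, e]\<close>, and an element with at most one upper cover in \<open>G\<^sup>-\<close> is
  meet-irreducible. The key step, which uses \<open>\<sigma>\<close>, shows that such a \<open>g'\<close> has at most one upper
  cover in \<open>G\<^sup>-\<close>; hence \<open>g'\<close> is meet-irreducible again, and descending induction from \<open>e\<close>
  shows that \<open>[g, e]\<close> is a chain. The converse is immediate.\<close>

lemma covered_by_imp_less: "covered_by x y \<Longrightarrow> x < y"
  by (simp add: covered_by_def)

lemma covered_by_upper_eq: "covered_by x y \<Longrightarrow> x < w \<Longrightarrow> w \<le> y \<Longrightarrow> w = y"
  unfolding covered_by_def by (auto simp: le_less)

lemma covered_by_lower_eq: "covered_by x y \<Longrightarrow> x \<le> w \<Longrightarrow> w < y \<Longrightarrow> w = x"
  unfolding covered_by_def by (auto simp: le_less)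

lemma less_sup_if_not_le: "\<not> y \<le> x \<Longrightarrow> (x::'a::lattice) < sup x y"
  by (simp add: less_le_not_le)

lemma inf_less_if_not_le: "\<not> x \<le> y \<Longrightarrow> inf x y < (x::'a::lattice)"
  by (simp add: less_le_not_le)

lemma modular_lawD:
  fixes x y z :: "'a::lattice"
  assumes "modular_lattice TYPE('a)" and "x \<le> z"
  shows "sup x (inf y z) = inf (sup x y) z"
  using assms unfolding modular_lattice_def by blast

lemma le_if_le_sup_and_inf_le:
  fixes a b t :: "'a::lattice"
  assumes "modular_lattice TYPE('a)" and "b \<le> sup a t" and "inf t (sup a b) \<le> a"
  shows "b \<le> a"
proof -
  have "a = sup a (inf t (sup a b))"
    using assms(3) by (simp add: sup_absorb1)
  also have "\<dots> = inf (sup a t) (sup a b)"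
    using modular_lawD[OF assms(1)] by simp
  also have "\<dots> = sup a b"
    using assms(2) by (simp add: inf_absorb2)
  finally show ?thesis
    by (metis sup.cobounded2)
qed

lemma covered_by_sup_if_covered_by_inf:
  assumes modular: "modular_lattice TYPE('a::lattice)" and cov: "covered_by (inf x (u::'a)) u"
  shows "covered_by x (sup x u)"
  unfolding covered_by_def
proof (intro conjI notI)
  have "\<not> u \<le> x"
    using cov by (auto simp: covered_by_def inf_absorb2)
  then show "x < sup x u"
    by (rule less_sup_if_not_le)
  assume "\<exists>w. x < w \<and> w < sup x u"
  then obtain w where "x < w" "w < sup x u"
    by blast
  have "\<not> u \<le> w"
    using \<open>x < w\<close> \<open>w < sup x u\<close> by (auto simp: less_le_not_le)
  then have "inf w u < u"
    using inf_less_if_not_le[of u w] by (simp add: inf_commute)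
  moreover have "inf x u \<le> inf w u"
    using \<open>x < w\<close> by (simp add: le_infI1)
  ultimately have "inf w u = inf x u"
    using covered_by_lower_eq[OF cov] by blast
  then have "x = inf (sup x u) w"
    using modular_lawD[OF modular, of x w u] \<open>x < w\<close> by (simp add: inf_commute sup_absorb1)
  with \<open>x < w\<close> \<open>w < sup x u\<close> show False
    by (simp add: inf_absorb2)
qed

lemma covered_by_inf_transpose:
  assumes modular: "modular_lattice TYPE('a::lattice)"
    and cov: "covered_by y (t::'a)" and "x \<le> t" and "\<not> x \<le> y"
  shows "covered_by (inf y x) x"
  unfolding covered_by_def
proof (intro conjI notI)
  show "inf y x < x"
    using \<open>\<not> x \<le> y\<close> by (simp add: less_le_not_le)
  assume "\<exists>w. inf y x < w \<and> w < x"
  then obtain w where "inf y x < w" "w < x"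
    by blast
  have "sup y x = t"
    using covered_by_upper_eq[OF cov less_sup_if_not_le[OF \<open>\<not> x \<le> y\<close>]] cov \<open>x \<le> t\<close>
    by (simp add: covered_by_imp_less less_imp_le)
  have "\<not> w \<le> y"
    using \<open>inf y x < w\<close> \<open>w < x\<close> by (auto simp: less_le_not_le)
  then have "sup y w = t"
    using covered_by_upper_eq[OF cov less_sup_if_not_le] \<open>w < x\<close> \<open>sup y x = t\<close>
    by (metis le_less sup_mono)
  have "sup w (inf y x) = inf (sup w y) x"
    using modular_lawD[OF modular] \<open>w < x\<close> by simp
  then have "w = inf t x"
    using \<open>sup y w = t\<close> \<open>inf y x < w\<close> by (simp add: sup_commute sup_absorb1)
  with \<open>w < x\<close> \<open>x \<le> t\<close> show False
    by (simp add: inf_absorb2)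
qed

lemma wf_less_above:
  assumes "noetherian_order TYPE('a::order)"
  shows "wf {(x, y). (a::'a) \<le> x \<and> x < y}"
  unfolding wf_iff_no_infinite_down_chain
proof
  assume "\<exists>f. \<forall>n. (f (Suc n), f n) \<in> {(x, y). a \<le> x \<and> x < y}"
  then obtain f where "\<forall>n. a \<le> f (Suc n) \<and> f (Suc n) < f n"
    by auto
  then have "(\<forall>n. a \<le> (f \<circ> Suc) n) \<and> (\<forall>n. (f \<circ> Suc) (Suc n) < (f \<circ> Suc) n)"
    by simp
  with assms show False
    unfolding noetherian_order_def by blast
qed

lemma wf_greater_below:
  assumes "noetherian_order TYPE('a::order)"
  shows "wf {(x, y). x \<le> (b::'a) \<and> y < x}"
  unfolding wf_iff_no_infinite_down_chain
proof
  assume "\<exists>f. \<forall>n. (f (Suc n), f n) \<in> {(x, y). x \<le> b \<and> y < x}"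
  then obtain f where "\<forall>n. f (Suc n) \<le> b \<and> f n < f (Suc n)"
    by auto
  then have "(\<forall>n. (f \<circ> Suc) n \<le> b) \<and> (\<forall>n. (f \<circ> Suc) n < (f \<circ> Suc) (Suc n))"
    by simp
  with assms show False
    unfolding noetherian_order_def by blast
qed

lemma exists_upper_cover:
  assumes "noetherian_order TYPE('a::order)" and "(a::'a) < b"
  shows "\<exists>c. covered_by a c \<and> c \<le> b"
proof -
  have "b \<in> {z. a < z \<and> z \<le> b}"
    using assms(2) by simp
  then obtain c where c: "a < c" "c \<le> b"
    and min: "\<And>z. a \<le> z \<Longrightarrow> z < c \<Longrightarrow> \<not> (a < z \<and> z \<le> b)"
    by (rule wfE_min[OF wf_less_above[OF assms(1)]]) blast
  have "covered_by a c"
    unfolding covered_by_def using c min less_imp_le less_le_trans by blast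
  with c show ?thesis
    by blast
qed

lemma exists_lower_cover:
  assumes "noetherian_order TYPE('a::order)" and "(a::'a) < b"
  shows "\<exists>c. covered_by c b \<and> a \<le> c"
proof -
  have "a \<in> {z. a \<le> z \<and> z < b}"
    using assms(2) by simp
  then obtain c where c: "a \<le> c" "c < b"
    and max: "\<And>z. z \<le> b \<Longrightarrow> c < z \<Longrightarrow> \<not> (a \<le> z \<and> z < b)"
    by (rule wfE_min[OF wf_greater_below[OF assms(1)]]) blast
  have "covered_by c b"
    unfolding covered_by_def using c max less_imp_le le_less_trans by blast
  with c show ?thesis
    by blast
qed

primrec cover_chain :: "'a::order \<Rightarrow> 'a \<Rightarrow> nat \<Rightarrow> bool" where
  "cover_chain a b 0 \<longleftrightarrow> a = b"
| "cover_chain a c (Suc k) \<longleftrightarrow> (\<exists>b. cover_chain a b k \<and> covered_by b c)"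

lemma cover_chain_imp_le: "cover_chain a b k \<Longrightarrow> a \<le> b"
  by (induction k arbitrary: b) (auto, meson covered_by_imp_less less_imp_le order_trans)

lemma cover_chain_refl_iff: "cover_chain a a k \<longleftrightarrow> k = 0"
  by (cases k) (auto dest!: cover_chain_imp_le covered_by_imp_less)

lemma cover_chain_append: "cover_chain a b k \<Longrightarrow> cover_chain b c l \<Longrightarrow> cover_chain a c (k + l)"
  by (induction l arbitrary: c) auto

lemma cover_chain_exists:
  assumes "noetherian_order TYPE('a::order)" and "(a::'a) \<le> b"
  shows "\<exists>k. cover_chain a b k"
  using \<open>a \<le> b\<close>
proof (induction b rule: wf_induct[OF wf_less_above[OF assms(1), of a]])
  case (1 b)
  show ?case
  proof (cases "a = b")
    case False
    with \<open>a \<le> b\<close> obtain c where "covered_by c b" "a \<le> c"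
      using exists_lower_cover[OF assms(1)] by (metis order.order_iff_strict)
    with "1.IH" obtain k where "cover_chain a c k"
      by (auto dest: covered_by_imp_less)
    with \<open>covered_by c b\<close> show ?thesis
      by (meson cover_chain.simps(2))
  qed (simp add: cover_chain_refl_iff)
qed

lemma cover_chain_length_unique:
  assumes modular: "modular_lattice TYPE('a::lattice)"
    and noetherian: "noetherian_order TYPE('a)"
  shows "cover_chain (a::'a) b k \<Longrightarrow> cover_chain a b l \<Longrightarrow> k = l"
proof (induction k arbitrary: b l rule: less_induct)
  case (less k)
  show ?case
  proof (cases "k = 0 \<or> l = 0")
    case True
    with less.prems show ?thesis
      by (auto simp: cover_chain_refl_iff)
  next
    case False
    then obtain k' l' where "k = Suc k'" "l = Suc l'"
      by (auto simp: gr0_conv_Suc)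
    with less.prems obtain x y where
      x: "cover_chain a x k'" "covered_by x b" and y: "cover_chain a y l'" "covered_by y b"
      by auto
    show ?thesis
    proof (cases "x = y")
      case True
      with less.IH[of k'] x y \<open>k = Suc k'\<close> \<open>l = Suc l'\<close> show ?thesis
        by simp
    next
      case False
      have "\<not> y \<le> x" "\<not> x \<le> y"
        using False x(2) y(2) covered_by_lower_eq by (metis covered_by_imp_less)+
      then have "covered_by (inf x y) y" "covered_by (inf y x) x"
        using covered_by_inf_transpose[OF modular] x(2) y(2) by (auto dest: covered_by_imp_less)
      moreover obtain j where "cover_chain a (inf x y) j"
        using cover_chain_exists[OF noetherian] x(1) y(1) by (meson cover_chain_imp_le le_inf_iff)
      ultimately have "cover_chain a x (Suc j)" "cover_chain a y (Suc j)"
        by (auto simp: inf_commute)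
      then have "k' = Suc j"
        using less.IH x(1) \<open>k = Suc k'\<close> by blast
      moreover have "Suc j = l'"
        using less.IH y(1) \<open>cover_chain a y (Suc j)\<close> \<open>k = Suc k'\<close> \<open>k' = Suc j\<close> by blast
      ultimately show ?thesis
        using \<open>k = Suc k'\<close> \<open>l = Suc l'\<close> by simp
    qed
  qed
qed

lemma dual_chain_imp_meet_irreducible_neg:
  "(g::'a::lattice) \<le> e \<Longrightarrow> dual_chain e g \<Longrightarrow> meet_irreducible_neg e g"
  unfolding meet_irreducible_neg_def dual_chain_def
  by (metis inf.absorb1 inf.absorb2 inf.cobounded1 inf.cobounded2)

lemma dual_chain_if_least_above:
  assumes "dual_chain e g'" and "\<And>z. g < z \<Longrightarrow> z \<le> e \<Longrightarrow> g' \<le> z"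
  shows "dual_chain e g"
  using assms unfolding dual_chain_def by (metis order.order_iff_strict)

lemma meet_irreducible_neg_least_above:
  assumes noetherian: "noetherian_order TYPE('a::lattice)"
    and irreducible: "meet_irreducible_neg e (g::'a)" and "g < e"
  obtains g' where "covered_by g g'" "g' \<le> e" "\<And>z. g < z \<Longrightarrow> z \<le> e \<Longrightarrow> g' \<le> z"
proof -
  obtain g' where g': "covered_by g g'" "g' \<le> e"
    using exists_upper_cover[OF noetherian \<open>g < e\<close>] by blast
  have "g' \<le> z" if "g < z" "z \<le> e" for z
  proof (rule ccontr)
    assume "\<not> g' \<le> z"
    then have "inf g' z = g"
      using covered_by_lower_eq[OF g'(1)] inf_less_if_not_le \<open>g < z\<close> g'(1)
      by (metis covered_by_imp_less le_inf_iff less_imp_le)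
    with irreducible g' that show False
      unfolding meet_irreducible_neg_def by (metis covered_by_imp_less less_irrefl)
  qed
  with g' show ?thesis
    using that by blast
qed

lemma meet_irreducible_neg_if_unique_upper_cover:
  assumes noetherian: "noetherian_order TYPE('a::lattice)" and "(g::'a) \<le> e"
    and unique: "\<And>a b. covered_by g a \<Longrightarrow> covered_by g b \<Longrightarrow> a \<le> e \<Longrightarrow> b \<le> e \<Longrightarrow> a = b"
  shows "meet_irreducible_neg e g"
  unfolding meet_irreducible_neg_def
proof (intro conjI notI)
  show "g \<le> e"
    by fact
  assume "\<exists>a b. a \<le> e \<and> b \<le> e \<and> a \<noteq> g \<and> b \<noteq> g \<and> g = inf a b"
  then obtain a b where ab: "a \<le> e" "b \<le> e" "g < a" "g < b" "g = inf a b"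
    by (metis inf.cobounded1 inf.cobounded2 order.order_iff_strict)
  then obtain c d where "covered_by g c" "c \<le> a" "covered_by g d" "d \<le> b"
    using exists_upper_cover[OF noetherian] by meson
  with ab unique have "c \<le> g"
    by (metis le_inf_iff order_trans)
  with \<open>covered_by g c\<close> show False
    by (meson covered_by_imp_less leD)
qed

locale right_lgroup =
  fixes m :: "'a::lattice \<Rightarrow> 'a \<Rightarrow> 'a" (infixl \<open>\<cdot>\<close> 70) and e :: 'a and i :: "'a \<Rightarrow> 'a"
  assumes right_l_group: "right_l_group m e i"
begin

lemma assoc: "x \<cdot> y \<cdot> z = x \<cdot> (y \<cdot> z)"
  using right_l_group unfolding right_l_group_def by blast

lemma left_neutral [simp]: "e \<cdot> x = x"
  using right_l_group unfolding right_l_group_def by blast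

lemma right_neutral [simp]: "x \<cdot> e = x"
  using right_l_group unfolding right_l_group_def by blast

lemma left_inverse [simp]: "i x \<cdot> x = e"
  using right_l_group unfolding right_l_group_def by blast

lemma right_inverse [simp]: "x \<cdot> i x = e"
  using right_l_group unfolding right_l_group_def by blast

lemma mult_right_mono: "x \<le> y \<Longrightarrow> x \<cdot> z \<le> y \<cdot> z"
  using right_l_group unfolding right_l_group_def by blast

lemma mult_inverse_cancel_right [simp]: "x \<cdot> z \<cdot> i z = x"
  by (simp add: assoc)

lemma inverse_mult_cancel_right [simp]: "x \<cdot> i z \<cdot> z = x"
  by (simp add: assoc)

lemma inverse_mult_cancel_left [simp]: "i z \<cdot> (z \<cdot> x) = x"
  by (simp flip: assoc)

lemma mult_inverse_cancel_left [simp]: "z \<cdot> (i z \<cdot> x) = x"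
  by (simp flip: assoc)

lemma mult_left_cancel: "z \<cdot> x = z \<cdot> y \<longleftrightarrow> x = y"
  by (metis inverse_mult_cancel_left)

lemma mult_right_le_iff: "x \<cdot> z \<le> y \<cdot> z \<longleftrightarrow> x \<le> y"
  by (metis mult_right_mono mult_inverse_cancel_right)

lemma mult_right_less_iff: "x \<cdot> z < y \<cdot> z \<longleftrightarrow> x < y"
  by (simp add: less_le_not_le mult_right_le_iff)

lemma covered_by_mult_right: "covered_by x y \<Longrightarrow> covered_by (x \<cdot> z) (y \<cdot> z)"
  unfolding covered_by_def by (metis inverse_mult_cancel_right mult_right_less_iff)

lemma cover_chain_mult_right: "cover_chain a b k \<Longrightarrow> cover_chain (a \<cdot> z) (b \<cdot> z) k"
  by (induction k arbitrary: b) (auto intro: covered_by_mult_right)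

end

locale modular_noetherian_right_lgroup = right_lgroup m e i
  for m :: "'a::lattice \<Rightarrow> 'a \<Rightarrow> 'a" (infixl \<open>\<cdot>\<close> 70) and e i +
  assumes modular: "modular_lattice TYPE('a)"
    and noetherian: "noetherian_order TYPE('a)"
    and coatom_meet_exists: "\<exists>s. is_meet_of (coatoms_below e) s"
begin

definition \<sigma> where
  "\<sigma> = (SOME s. is_meet_of (coatoms_below e) s)"

lemma sigma_is_meet: "is_meet_of (coatoms_below e) \<sigma>"
  unfolding \<sigma>_def using someI_ex[OF coatom_meet_exists] .

lemma sigma_mult_le_lower_cover:
  assumes "covered_by y x"
  shows "\<sigma> \<cdot> x \<le> y"
proof -
  have "y \<cdot> i x \<in> coatoms_below e"
    using covered_by_mult_right[OF assms, of "i x"] by (simp add: coatoms_below_def)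
  then have "\<sigma> \<le> y \<cdot> i x"
    using sigma_is_meet by (simp add: is_meet_of_def)
  then show ?thesis
    using mult_right_mono[of \<sigma> "y \<cdot> i x" x] by simp
qed

lemma le_sigma_mult:
  assumes "\<And>y. covered_by y x \<Longrightarrow> t \<le> y"
  shows "t \<le> \<sigma> \<cdot> x"
proof -
  have "t \<cdot> i x \<le> c" if "c \<in> coatoms_below e" for c
  proof -
    have "covered_by (c \<cdot> x) x"
      using that covered_by_mult_right[of c e x] by (simp add: coatoms_below_def)
    then have "t \<le> c \<cdot> x"
      by (rule assms)
    then show ?thesis
      using mult_right_mono[of t "c \<cdot> x" "i x"] by simp
  qed
  then have "t \<cdot> i x \<le> \<sigma>"
    using sigma_is_meet by (simp add: is_meet_of_def)
  then show ?thesis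
    using mult_right_mono[of "t \<cdot> i x" \<sigma> x] by simp
qed

lemma sigma_le_e: "\<sigma> \<le> e"
proof (cases "\<exists>c. covered_by c e")
  case True
  then obtain c where "c \<in> coatoms_below e"
    by (auto simp: coatoms_below_def)
  moreover from this have "\<sigma> \<le> c"
    using sigma_is_meet by (simp add: is_meet_of_def)
  ultimately show ?thesis
    by (auto simp: coatoms_below_def dest!: covered_by_imp_less)
next
  case False
  have "e \<le> i \<sigma>"
  proof (rule ccontr)
    assume "\<not> e \<le> i \<sigma>"
    then have "inf e (i \<sigma>) < e"
      by (rule inf_less_if_not_le)
    with False show False
      using exists_lower_cover[OF noetherian] by blast
  qed
  then show ?thesis
    using mult_right_mono[of e "i \<sigma>" \<sigma>] by simp
qed

lemma sigma_mult_le: "\<sigma> \<cdot> x \<le> x"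
  using mult_right_mono[OF sigma_le_e, of x] by simp

lemma sigma_mult_mono:
  assumes "x \<le> y"
  shows "\<sigma> \<cdot> x \<le> \<sigma> \<cdot> y"
proof (rule le_sigma_mult)
  fix z
  assume "covered_by z y"
  show "\<sigma> \<cdot> x \<le> z"
  proof (cases "x \<le> z")
    case True
    then show ?thesis
      using sigma_mult_le order_trans by blast
  next
    case False
    then have "covered_by (inf z x) x"
      using covered_by_inf_transpose[OF modular \<open>covered_by z y\<close> assms] by blast
    then show ?thesis
      using sigma_mult_le_lower_cover le_inf_iff by blast
  qed
qed

lemma upper_cover_of_sigma_mult_le:
  assumes cov: "covered_by (\<sigma> \<cdot> x) u"
  shows "u \<le> x"
proof (rule ccontr)
  assume "\<not> u \<le> x"
  have "inf x u = \<sigma> \<cdot> x"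
  proof (rule covered_by_lower_eq[OF cov])
    show "\<sigma> \<cdot> x \<le> inf x u"
      using sigma_mult_le covered_by_imp_less[OF cov] by simp
    show "inf x u < u"
      using inf_less_if_not_le[OF \<open>\<not> u \<le> x\<close>] by (simp add: inf_commute)
  qed
  then have "covered_by x (sup x u)"
    using covered_by_sup_if_covered_by_inf[OF modular] cov by simp
  have "\<sigma> \<cdot> sup x u \<le> \<sigma> \<cdot> x"
  proof (rule le_sigma_mult)
    fix c
    assume "covered_by c x"
    have "c \<le> x"
      using covered_by_imp_less[OF \<open>covered_by c x\<close>] by simp
    have "inf (sup c u) x = c"
      using modular_lawD[OF modular \<open>c \<le> x\<close>, of u] \<open>inf x u = \<sigma> \<cdot> x\<close>
        sigma_mult_le_lower_cover[OF \<open>covered_by c x\<close>]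
      by (simp add: inf_commute sup_absorb1)
    then have "covered_by (sup c u) (sup (sup c u) x)"
      using covered_by_sup_if_covered_by_inf[OF modular] \<open>covered_by c x\<close> by simp
    moreover have "sup (sup c u) x = sup x u"
      using \<open>c \<le> x\<close> by (metis sup.absorb2 sup_assoc sup_commute)
    ultimately have "\<sigma> \<cdot> sup x u \<le> inf (sup c u) x"
      using sigma_mult_le_lower_cover \<open>covered_by x (sup x u)\<close> by simp
    then show "\<sigma> \<cdot> sup x u \<le> c"
      using \<open>inf (sup c u) x = c\<close> by simp
  qed
  then have "sup x u = x"
    using sigma_mult_mono[of x "sup x u"] by (simp add: antisym mult_left_cancel)
  with \<open>\<not> u \<le> x\<close> show False
    by (metis sup.cobounded2)
qed

text \<open>Right translates of a maximal chain from \<open>\<sigma>\<close> to \<open>e\<close> have the same length below \<open>x\<close>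
  and below \<open>y\<close>, so by Jordan--Dedekind the interval \<open>[\<sigma> \<cdot> x, \<sigma> \<cdot> y]\<close> has length one.\<close>

lemma sigma_mult_covered_by:
  assumes "covered_by x y"
  shows "covered_by (\<sigma> \<cdot> x) (\<sigma> \<cdot> y)"
proof -
  obtain n where n: "cover_chain \<sigma> e n"
    using cover_chain_exists[OF noetherian sigma_le_e] by blast
  have "cover_chain (\<sigma> \<cdot> x) x n" "cover_chain (\<sigma> \<cdot> y) y n"
    using cover_chain_mult_right[OF n] by simp_all
  then have "cover_chain (\<sigma> \<cdot> x) y (Suc n)"
    using assms by auto
  have "\<sigma> \<cdot> x \<le> \<sigma> \<cdot> y"
    using sigma_mult_mono covered_by_imp_less[OF assms] by simp
  then obtain j where j: "cover_chain (\<sigma> \<cdot> x) (\<sigma> \<cdot> y) j"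
    using cover_chain_exists[OF noetherian] by blast
  then have "cover_chain (\<sigma> \<cdot> x) y (j + n)"
    using cover_chain_append \<open>cover_chain (\<sigma> \<cdot> y) y n\<close> by blast
  then have "j + n = Suc n"
    using cover_chain_length_unique[OF modular noetherian] \<open>cover_chain (\<sigma> \<cdot> x) y (Suc n)\<close>
    by blast
  with j show ?thesis
    by simp
qed

lemma cover_le_sigma_mult:
  assumes "a \<le> \<sigma> \<cdot> t" "d \<le> t" "covered_by a a'" "a' < d"
    and least: "\<And>z. a < z \<Longrightarrow> z \<le> d \<Longrightarrow> a' \<le> z"
  shows "a' \<le> \<sigma> \<cdot> t"
proof (rule le_sigma_mult)
  fix y
  assume "covered_by y t"
  show "a' \<le> y"
  proof (cases "d \<le> y")
    case True
    with \<open>a' < d\<close> show ?thesis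
      by simp
  next
    case False
    then have cov: "covered_by (inf y d) d"
      using covered_by_inf_transpose[OF modular \<open>covered_by y t\<close> \<open>d \<le> t\<close>] by blast
    have "a \<le> inf y d"
      using assms(1,3,4) sigma_mult_le_lower_cover[OF \<open>covered_by y t\<close>]
      by (auto dest!: covered_by_imp_less)
    moreover have "inf y d \<noteq> a"
      using cov \<open>covered_by a a'\<close> \<open>a' < d\<close> unfolding covered_by_def by auto
    ultimately have "a < inf y d"
      by (metis order.order_iff_strict)
    then have "a' \<le> inf y d"
      using least[of "inf y d"] by simp
    then show ?thesis
      by simp
  qed
qed

lemma sigma_preimage_inf_e:
  assumes "\<sigma> \<cdot> t = g" "covered_by g g'" "g' \<le> e"
    and least: "\<And>z. g < z \<Longrightarrow> z \<le> e \<Longrightarrow> g' \<le> z"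
  shows "inf t e = g'"
proof (rule ccontr)
  assume "inf t e \<noteq> g'"
  moreover have "g' \<le> t"
    using upper_cover_of_sigma_mult_le assms(1,2) by blast
  ultimately have "g' < inf t e"
    using \<open>g' \<le> e\<close> by (metis le_inf_iff order.order_iff_strict)
  then have "g' \<le> \<sigma> \<cdot> t"
    using cover_le_sigma_mult[of g t "inf t e" g'] assms least by simp
  with assms(1,2) show False
    by (metis covered_by_imp_less leD)
qed

text \<open>With \<open>t\<close> the \<open>\<sigma>\<close>-preimage of \<open>g\<close>, the cover \<open>A\<close> yields a cover \<open>t \<prec> sup t A\<close> whose
  \<open>\<sigma>\<close>-image is \<open>g'\<close>; this forces \<open>B \<le> sup t A\<close> and then, by modularity, \<open>B \<le> A\<close>.\<close>

lemma unique_upper_cover_of_least_above: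
  assumes "covered_by g g'" and least: "\<And>z. g < z \<Longrightarrow> z \<le> e \<Longrightarrow> g' \<le> z"
    and "covered_by g' A" "covered_by g' B" "A \<le> e" "B \<le> e"
  shows "A = B"
proof -
  define t where "t = i \<sigma> \<cdot> g"
  have "\<sigma> \<cdot> t = g"
    by (simp add: t_def)
  have "g' < A" "g' < B"
    using assms(3,4) by (simp_all add: covered_by_imp_less)
  then have "g' \<le> e"
    using \<open>A \<le> e\<close> by simp
  have "inf t e = g'"
    using sigma_preimage_inf_e[OF \<open>\<sigma> \<cdot> t = g\<close> \<open>covered_by g g'\<close> \<open>g' \<le> e\<close> least] .
  have "inf A t = g'"
  proof (rule antisym)
    show "inf A t \<le> g'"
      using \<open>A \<le> e\<close> \<open>inf t e = g'\<close> inf_mono by fastforce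
    show "g' \<le> inf A t"
      using \<open>g' < A\<close> \<open>inf t e = g'\<close> by (metis inf.cobounded1 le_inf_iff less_imp_le)
  qed
  define p where "p = sup t A"
  have "t \<le> p" "A \<le> p"
    by (simp_all add: p_def)
  have "covered_by t p"
    using covered_by_sup_if_covered_by_inf[OF modular, of t A] \<open>inf A t = g'\<close> \<open>covered_by g' A\<close>
    by (simp add: inf_commute p_def)
  have "g' \<le> \<sigma> \<cdot> p"
  proof (rule cover_le_sigma_mult[OF _ \<open>A \<le> p\<close> \<open>covered_by g g'\<close> \<open>g' < A\<close>])
    show "g \<le> \<sigma> \<cdot> p"
      using sigma_mult_mono[OF \<open>t \<le> p\<close>] \<open>\<sigma> \<cdot> t = g\<close> by simp
    show "g' \<le> z" if "g < z" "z \<le> A" for z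
      using least that \<open>A \<le> e\<close> by simp
  qed
  moreover have "covered_by g (\<sigma> \<cdot> p)"
    using sigma_mult_covered_by[OF \<open>covered_by t p\<close>] \<open>\<sigma> \<cdot> t = g\<close> by simp
  ultimately have "\<sigma> \<cdot> p = g'"
    using covered_by_upper_eq \<open>covered_by g g'\<close> by (metis covered_by_imp_less)
  then have "B \<le> p"
    using upper_cover_of_sigma_mult_le \<open>covered_by g' B\<close> by metis
  moreover have "inf t (sup A B) \<le> A"
    using \<open>A \<le> e\<close> \<open>B \<le> e\<close> \<open>inf t e = g'\<close> \<open>g' < A\<close>
    by (metis inf_mono le_sup_iff less_imp_le order.refl order.trans)
  ultimately have "B \<le> A"
    using le_if_le_sup_and_inf_le[OF modular] by (simp add: p_def sup_commute)
  then show "A = B"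
    using covered_by_upper_eq[OF \<open>covered_by g' A\<close> \<open>g' < B\<close>] by simp
qed

lemma meet_irreducible_neg_imp_dual_chain:
  "meet_irreducible_neg e g \<Longrightarrow> dual_chain e g"
proof (induction g rule: wf_induct[OF wf_greater_below[OF noetherian, of e]])
  case (1 g)
  have "g \<le> e"
    using "1.prems" by (simp add: meet_irreducible_neg_def)
  show ?case
  proof (cases "g = e")
    case True
    then show ?thesis
      by (auto simp: dual_chain_def)
  next
    case False
    with \<open>g \<le> e\<close> have "g < e"
      by simp
    then obtain g' where g': "covered_by g g'" "g' \<le> e"
      and least: "\<And>z. g < z \<Longrightarrow> z \<le> e \<Longrightarrow> g' \<le> z"
      using meet_irreducible_neg_least_above[OF noetherian "1.prems"] by blast
    have "meet_irreducible_neg e g'"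
      using meet_irreducible_neg_if_unique_upper_cover[OF noetherian \<open>g' \<le> e\<close>]
        unique_upper_cover_of_least_above[OF g'(1) least] by blast
    moreover have "(g', g) \<in> {(x, y). x \<le> e \<and> y < x}"
      using g' by (simp add: covered_by_imp_less)
    ultimately have "dual_chain e g'"
      using "1.IH" by blast
    then show ?thesis
      using least by (rule dual_chain_if_least_above)
  qed
qed

theorem meet_irreducible_neg_iff_dual_chain:
  "g \<le> e \<Longrightarrow> meet_irreducible_neg e g \<longleftrightarrow> dual_chain e g"
  using meet_irreducible_neg_imp_dual_chain dual_chain_imp_meet_irreducible_neg by blast

end

theorem mainTheorem9:
  fixes m :: "'a::lattice \<Rightarrow> 'a \<Rightarrow> 'a" and e :: 'a and i :: "'a \<Rightarrow> 'a" and g :: 'a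
  assumes "right_l_group m e i"
    and "modular_lattice TYPE('a)"
    and "noetherian_order TYPE('a)"
    and "\<exists>s. is_meet_of (coatoms_below e) s"
    and "g \<le> e"
  shows "meet_irreducible_neg e g \<longleftrightarrow> dual_chain e g"
proof -
  interpret modular_noetherian_right_lgroup m e i
    using assms(1-4)
    by (simp add: modular_noetherian_right_lgroup_def modular_noetherian_right_lgroup_axioms_def
        right_lgroup_def)
  show ?thesis
    using assms(5) by (rule meet_irreducible_neg_iff_dual_chain)
qed

end
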